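(* Let $d\ge1$ be an integer and let $G$ be a triangle-free graph on $n$ vertices with maximum degree $d$. Then for all $\lambda>0$, writing $w=W(d\log(1+\lambda))$, \[ P_G(\lambda) \;\ge\; \exp\!\left(\left[w^2+2w\right]\frac{n}{2d}\right). \] In particular (taking $\lambda=1$), for every $\varepsilon>0$ there is $d_0$ such that if $d\ge d_0$ then $G$ has at least $\exp\!\left[\left(\frac12-\varepsilon\right)\frac{\log^2 d}{d}n\right]$ independent sets.
   Context: For a graph $G$, $P_G(\lambda)=\sum_{J}\lambda^{|J|}$, the sum over all independent sets $J$ of $G$ (including the empty set), is the hard-core partition function (independence polynomial). For $z>0$, $W(z)$ denotes the unique positive real with $W(z)e^{W(z)}=z$. Logarithms are natural. *)

theory Defs
  imports Complex_Main
begin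

definition simple_graph :: "'a set \<Rightarrow> ('a \<Rightarrow> 'a \<Rightarrow> bool) \<Rightarrow> bool" where
  "simple_graph V E \<longleftrightarrow> finite V \<and> (\<forall>u v. E u v \<longrightarrow> E v u)
     \<and> (\<forall>v. \<not> E v v) \<and> (\<forall>u v. E u v \<longrightarrow> u \<in> V \<and> v \<in> V)"

definition degree :: "'a set \<Rightarrow> ('a \<Rightarrow> 'a \<Rightarrow> bool) \<Rightarrow> 'a \<Rightarrow> nat" where
  "degree V E v = card {u \<in> V. E v u}"

definition max_degree_eq :: "'a set \<Rightarrow> ('a \<Rightarrow> 'a \<Rightarrow> bool) \<Rightarrow> nat \<Rightarrow> bool" where
  "max_degree_eq V E d \<longleftrightarrow> (\<forall>v\<in>V. degree V E v \<le> d) \<and> (\<exists>v\<in>V. degree V E v = d)"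

definition triangle_free :: "'a set \<Rightarrow> ('a \<Rightarrow> 'a \<Rightarrow> bool) \<Rightarrow> bool" where
  "triangle_free V E \<longleftrightarrow> \<not> (\<exists>a\<in>V. \<exists>b\<in>V. \<exists>c\<in>V. E a b \<and> E b c \<and> E a c)"

definition independent_set :: "'a set \<Rightarrow> ('a \<Rightarrow> 'a \<Rightarrow> bool) \<Rightarrow> 'a set \<Rightarrow> bool" where
  "independent_set V E J \<longleftrightarrow> J \<subseteq> V \<and> (\<forall>u\<in>J. \<forall>v\<in>J. \<not> E u v)"

definition hardcore_pf :: "'a set \<Rightarrow> ('a \<Rightarrow> 'a \<Rightarrow> bool) \<Rightarrow> real \<Rightarrow> real" where
  "hardcore_pf V E lam = (\<Sum>J\<in>{J. independent_set V E J}. lam ^ card J)"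

definition lambertW :: "real \<Rightarrow> real" where
  "lambertW z = (THE w. w > 0 \<and> w * exp w = z)"

end

theory Submission
  imports Defs
begin

text \<open>
  Let \<open>Z(t)\<close> be the partition function at fugacity \<open>t\<close>.  In the hard-core model a vertex \<open>v\<close>
  is occupied with probability \<open>t/(1+t)\<close> times the probability that no neighbour of \<open>v\<close> is
  occupied.  Conditioned on the configuration away from the neighbourhood of \<open>v\<close>, the \<open>Y\<close>
  neighbours not blocked by it are pairwise non-adjacent (the graph is triangle-free), so they
  are all unoccupied with probability \<open>(1+t)^-Y\<close>.  The tangent bound
  \<open>exp(-x) \<ge> exp(-w)(1+w-x)\<close>, averaged over \<open>v\<close> with the degree bound controlling the mean
  of \<open>Y\<close>, gives \<open>exp(-w) n Z(t) \<le> (1+t) Z'(t)\<close> whenever \<open>d log(1+t) = w e^w\<close>.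
  Along the curve \<open>t = exp(x e^x / d) - 1\<close> this says that \<open>log Z(t) - n (x\<^sup>2 + 2x)/(2d)\<close> is
  non-decreasing in \<open>x\<close>; it vanishes at \<open>x = 0\<close>, and \<open>x = W(d log(1+\<lambda>))\<close> gives \<open>t = \<lambda>\<close>.
\<close>

lemma sum_Pow_insert:
  assumes "finite A" "a \<notin> A"
  shows "(\<Sum>S\<in>Pow (insert a A). f S) = (\<Sum>S\<in>Pow A. f S) + (\<Sum>S\<in>Pow A. f (insert a S))"
proof -
  have "inj_on (insert a) (Pow A)" and "Pow A \<inter> insert a ` Pow A = {}"
    using assms(2) by (auto simp: inj_on_def)
  then show ?thesis
    unfolding Pow_insert using assms(1) by (simp add: sum.union_disjoint sum.reindex)
qed

lemma sum_Pow_power_card: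
  fixes t :: "'b::comm_semiring_1"
  assumes "finite A"
  shows "(\<Sum>S\<in>Pow A. t ^ card S) = (1 + t) ^ card A"
  using prod_add[OF assms, of "\<lambda>_. t" "\<lambda>_. 1"] by (simp add: add.commute)

lemma sum_Pow_card_mult_power_card:
  fixes t :: real
  assumes "finite A"
  shows "(1 + t) * (\<Sum>S\<in>Pow A. real (card S) * t ^ card S) = real (card A) * t * (1 + t) ^ card A"
  using assms
proof (induction A rule: finite_induct)
  case (insert a A)
  define Q where "Q = (\<Sum>S\<in>Pow A. real (card S) * t ^ card S)"
  have card_insert: "card (insert a S) = Suc (card S)" if "S \<in> Pow A" for S
    using insert.hyps that by (meson PowD card_insert_disjoint finite_subset subsetD)
  have "(\<Sum>S\<in>Pow (insert a A). real (card S) * t ^ card S) = (1 + t) * Q + t * (1 + t) ^ card A"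
    using insert.hyps card_insert unfolding Q_def
    by (simp add: sum_Pow_insert sum_Pow_power_card[symmetric] sum_distrib_left sum.distrib
        algebra_simps)
  then have "(1 + t) * (\<Sum>S\<in>Pow (insert a A). real (card S) * t ^ card S)
      = (1 + t) * ((1 + t) * Q) + t * (1 + t) ^ Suc (card A)"
    by (simp add: algebra_simps)
  also have "\<dots> = real (card (insert a A)) * t * (1 + t) ^ card (insert a A)"
    using insert unfolding Q_def by (simp add: algebra_simps)
  finally show ?case .
qed simp

lemma mult_exp_strict_mono:
  fixes x y :: real
  assumes "0 \<le> x" "x < y"
  shows "x * exp x < y * exp y"
proof -
  have "x * exp x \<le> x * exp y" using assms by (intro mult_left_mono) auto
  also have "\<dots> < y * exp y" using assms by (intro mult_strict_right_mono) auto
  finally show ?thesis .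
qed

lemma lambertW:
  fixes z :: real
  assumes "z > 0"
  shows lambertW_pos: "lambertW z > 0" and lambertW_mult_exp: "lambertW z * exp (lambertW z) = z"
proof -
  have "\<exists>x. 0 \<le> x \<and> x \<le> z \<and> x * exp x = z"
  proof (rule IVT)
    have "z * 1 \<le> z * exp z" using assms by (intro mult_left_mono) auto
    then show "z \<le> z * exp z" by simp
  qed (use assms in \<open>auto intro!: continuous_intros\<close>)
  then obtain x where x: "0 \<le> x" "x * exp x = z" by auto
  with assms have "x > 0" by (cases "x = 0") auto
  have "lambertW z = x"
    unfolding lambertW_def
  proof (rule the_equality)
    fix w assume w: "w > 0 \<and> w * exp w = z"
    show "w = x"
      using mult_exp_strict_mono[of w x] mult_exp_strict_mono[of x w] w x by (cases w x rule: linorder_cases) auto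
  qed (use \<open>x > 0\<close> x in simp)
  with \<open>x > 0\<close> x show "lambertW z > 0" "lambertW z * exp (lambertW z) = z" by auto
qed

lemma le_lambertW:
  fixes a z :: real
  assumes "a > 0" "a * exp a \<le> z"
  shows "a \<le> lambertW z"
proof (rule ccontr)
  have z: "z > 0" using assms by (smt (verit) exp_gt_zero mult_pos_pos)
  assume "\<not> a \<le> lambertW z"
  then have "lambertW z * exp (lambertW z) < a * exp a"
    using mult_exp_strict_mono[of "lambertW z" a] lambertW_pos[OF z] by auto
  then show False using lambertW_mult_exp[OF z] assms by simp
qed

locale bounded_degree_triangle_free_graph =
  fixes V :: "'a set" and E :: "'a \<Rightarrow> 'a \<Rightarrow> bool" and d :: nat
  assumes simple: "simple_graph V E" and no_triangle: "triangle_free V E"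
    and degree_le: "\<And>v. v \<in> V \<Longrightarrow> degree V E v \<le> d"
begin

definition indep_sets :: "'a set set" where
  "indep_sets = {J. independent_set V E J}"

definition nbhd :: "'a \<Rightarrow> 'a set" where
  "nbhd v = {u\<in>V. E v u}"

lemma finite_V: "finite V"
  and edge_sym: "E u v \<Longrightarrow> E v u"
  and edge_irrefl: "\<not> E v v"
  and edge_in_V: "E u v \<Longrightarrow> u \<in> V \<and> v \<in> V"
  using simple by (auto simp: simple_graph_def)

lemma indep_sets_subset: "I \<in> indep_sets \<Longrightarrow> I \<subseteq> V"
  and indep_sets_no_edge: "I \<in> indep_sets \<Longrightarrow> u \<in> I \<Longrightarrow> w \<in> I \<Longrightarrow> \<not> E u w"
  by (auto simp: indep_sets_def independent_set_def)

lemma finite_indep_set: "I \<in> indep_sets \<Longrightarrow> finite I"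
  using finite_V indep_sets_subset finite_subset by blast

lemma finite_indep_sets: "finite indep_sets"
proof -
  have "indep_sets \<subseteq> Pow V" using indep_sets_subset by auto
  then show ?thesis using finite_V finite_subset by blast
qed

lemma hardcore_pf_eq: "hardcore_pf V E t = (\<Sum>I\<in>indep_sets. t ^ card I)"
  by (simp add: hardcore_pf_def indep_sets_def)

lemma hardcore_pf_ge_1:
  assumes "t \<ge> 0"
  shows "1 \<le> hardcore_pf V E t"
proof -
  have "{} \<in> indep_sets" by (simp add: indep_sets_def independent_set_def)
  then show ?thesis
    unfolding hardcore_pf_eq using member_le_sum[of "{}" indep_sets "\<lambda>I. t ^ card I"] assms finite_indep_sets by auto
qed

lemma hardcore_pf_0: "hardcore_pf V E 0 = 1"
proof -
  have "hardcore_pf V E 0 = (\<Sum>I\<in>indep_sets. if I = {} then 1 else 0)"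
    unfolding hardcore_pf_eq by (rule sum.cong) (auto simp: finite_indep_set card_eq_0_iff)
  also have "\<dots> = 1"
    using finite_indep_sets by (simp add: sum.delta indep_sets_def independent_set_def)
  finally show ?thesis .
qed

text \<open>Removing \<open>v\<close> maps the independent sets containing \<open>v\<close> bijectively onto those
  avoiding the closed neighbourhood of \<open>v\<close>.\<close>
lemma occupied_vertex_sum:
  fixes t :: real
  assumes v: "v \<in> V"
  shows "(1 + t) * (\<Sum>I\<in>{I\<in>indep_sets. v \<in> I}. t ^ card I)
    = t * (\<Sum>I\<in>{I\<in>indep_sets. I \<inter> nbhd v = {}}. t ^ card I)"
proof -
  define B where "B = {I\<in>indep_sets. v \<notin> I \<and> I \<inter> nbhd v = {}}"
  have bij: "bij_betw (insert v) B {I\<in>indep_sets. v \<in> I}"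
  proof (rule bij_betw_byWitness[where f' = "\<lambda>I. I - {v}"])
    show "insert v ` B \<subseteq> {I\<in>indep_sets. v \<in> I}"
    proof
      fix J assume "J \<in> insert v ` B"
      then obtain I where I: "I \<in> indep_sets" "I \<inter> nbhd v = {}" "J = insert v I"
        unfolding B_def by auto
      have "independent_set V E J"
        using I indep_sets_subset[OF I(1)] indep_sets_no_edge[OF I(1)] v edge_irrefl edge_sym edge_in_V
        unfolding independent_set_def nbhd_def by blast
      then show "J \<in> {I\<in>indep_sets. v \<in> I}" using I by (simp add: indep_sets_def)
    qed
    show "(\<lambda>I. I - {v}) ` {I\<in>indep_sets. v \<in> I} \<subseteq> B"
    proof
      fix J assume "J \<in> (\<lambda>I. I - {v}) ` {I\<in>indep_sets. v \<in> I}"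
      then obtain I where I: "I \<in> indep_sets" "v \<in> I" "J = I - {v}" by auto
      have "independent_set V E J"
        unfolding independent_set_def using I indep_sets_subset[OF I(1)] indep_sets_no_edge[OF I(1)] by blast
      moreover have "J \<inter> nbhd v = {}" using I indep_sets_no_edge[OF I(1)] unfolding nbhd_def by auto
      ultimately show "J \<in> B" using I by (simp add: indep_sets_def B_def)
    qed
  qed (auto simp: B_def)
  have "(\<Sum>I\<in>{I\<in>indep_sets. v \<in> I}. t ^ card I) = (\<Sum>I\<in>B. t ^ card (insert v I))"
    using sum.reindex_bij_betw[OF bij, of "\<lambda>I. t ^ card I"] by simp
  also have "\<dots> = t * (\<Sum>I\<in>B. t ^ card I)"
    unfolding sum_distrib_left by (rule sum.cong) (auto simp: B_def finite_indep_set)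
  finally have occupied: "(\<Sum>I\<in>{I\<in>indep_sets. v \<in> I}. t ^ card I) = t * (\<Sum>I\<in>B. t ^ card I)" .
  have split: "{I\<in>indep_sets. I \<inter> nbhd v = {}} = {I\<in>indep_sets. v \<in> I} \<union> B"
    using indep_sets_no_edge by (auto simp: B_def nbhd_def)
  have "(\<Sum>I\<in>{I\<in>indep_sets. I \<inter> nbhd v = {}}. t ^ card I)
      = (\<Sum>I\<in>{I\<in>indep_sets. v \<in> I}. t ^ card I) + (\<Sum>I\<in>B. t ^ card I)"
    unfolding split using finite_indep_sets by (intro sum.union_disjoint) (auto simp: B_def)
  then show ?thesis using occupied by (simp add: algebra_simps)
qed

lemma sum_occupied_vertices:
  fixes t :: real
  shows "(\<Sum>v\<in>V. \<Sum>I\<in>{I\<in>indep_sets. v \<in> I}. t ^ card I) = (\<Sum>I\<in>indep_sets. real (card I) * t ^ card I)"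
proof -
  have "(\<Sum>v\<in>V. \<Sum>I\<in>{I\<in>indep_sets. v \<in> I}. t ^ card I)
      = (\<Sum>I\<in>indep_sets. \<Sum>v\<in>V. if v \<in> I then t ^ card I else 0)"
    using finite_indep_sets by (simp add: sum.inter_filter sum.swap[of _ V])
  also have "\<dots> = (\<Sum>I\<in>indep_sets. real (card I) * t ^ card I)"
  proof (rule sum.cong)
    fix I assume "I \<in> indep_sets"
    then have "{v\<in>V. v \<in> I} = I" using indep_sets_subset by auto
    then show "(\<Sum>v\<in>V. if v \<in> I then t ^ card I else 0) = real (card I) * t ^ card I"
      using finite_V sum.inter_filter[of V "\<lambda>_. t ^ card I" "\<lambda>v. v \<in> I"] by simp
  qed simp
  finally show ?thesis .
qed

lemma sum_card_inter_nbhd: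
  assumes "I \<subseteq> V"
  shows "(\<Sum>v\<in>V. card (I \<inter> nbhd v)) = (\<Sum>u\<in>I. degree V E u)"
proof -
  have fin: "finite I" using assms finite_V finite_subset by blast
  have "(\<Sum>v\<in>V. card (I \<inter> nbhd v)) = (\<Sum>v\<in>V. \<Sum>u\<in>I. if E v u then 1 else 0)"
  proof (rule sum.cong)
    fix v
    have "I \<inter> nbhd v = {u\<in>I. E v u}" using assms unfolding nbhd_def by auto
    then show "card (I \<inter> nbhd v) = (\<Sum>u\<in>I. if E v u then 1 else 0)"
      using fin by (simp add: sum.If_cases Int_def)
  qed simp
  also have "\<dots> = (\<Sum>u\<in>I. \<Sum>v\<in>V. if E v u then 1 else 0)" by (rule sum.swap)
  also have "\<dots> = (\<Sum>u\<in>I. degree V E u)"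
  proof (rule sum.cong)
    fix u
    have "{v\<in>V. E v u} = {v\<in>V. E u v}" using edge_sym by blast
    then show "(\<Sum>v\<in>V. if E v u then 1 else 0) = degree V E u"
      using finite_V by (simp add: sum.If_cases Int_def degree_def)
  qed simp
  finally show ?thesis .
qed

lemma sum_card_inter_nbhd_le:
  fixes t :: real
  assumes "t \<ge> 0"
  shows "(\<Sum>v\<in>V. \<Sum>I\<in>indep_sets. real (card (I \<inter> nbhd v)) * t ^ card I)
    \<le> real d * (\<Sum>I\<in>indep_sets. real (card I) * t ^ card I)"
proof -
  have card_le: "(\<Sum>v\<in>V. card (I \<inter> nbhd v)) \<le> d * card I" if "I \<in> indep_sets" for I
  proof -
    have "(\<Sum>u\<in>I. degree V E u) \<le> (\<Sum>u\<in>I. d)"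
      using that indep_sets_subset degree_le by (intro sum_mono) auto
    then show ?thesis using sum_card_inter_nbhd indep_sets_subset[OF that] by (simp add: mult.commute)
  qed
  have "(\<Sum>v\<in>V. \<Sum>I\<in>indep_sets. real (card (I \<inter> nbhd v)) * t ^ card I)
      = (\<Sum>I\<in>indep_sets. real (\<Sum>v\<in>V. card (I \<inter> nbhd v)) * t ^ card I)"
    by (simp add: sum.swap[of _ V] sum_distrib_right)
  also have "\<dots> \<le> (\<Sum>I\<in>indep_sets. real (d * card I) * t ^ card I)"
    using card_le assms by (intro sum_mono mult_right_mono) (simp_all del: of_nat_sum of_nat_mult)
  also have "\<dots> = real d * (\<Sum>I\<in>indep_sets. real (card I) * t ^ card I)"
    by (simp add: sum_distrib_left algebra_simps)
  finally show ?thesis .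
qed

definition free_nbhd :: "'a \<Rightarrow> 'a set \<Rightarrow> 'a set" where
  "free_nbhd v K = {u\<in>nbhd v. \<forall>k\<in>K. \<not> E u k}"

lemma finite_free_nbhd: "finite (free_nbhd v K)"
  using finite_V by (simp add: free_nbhd_def nbhd_def)

text \<open>Every independent set is uniquely \<open>K \<union> S\<close>, with \<open>K\<close> independent and disjoint from the
  neighbourhood of \<open>v\<close> and \<open>S\<close> an arbitrary subset of the neighbours of \<open>v\<close> that are not adjacent
  to \<open>K\<close>; triangle-freeness makes any such \<open>S\<close> independent.\<close>
lemma sum_indep_sets_split_nbhd:
  assumes v: "v \<in> V"
  shows "(\<Sum>I\<in>indep_sets. g I)
    = (\<Sum>K\<in>{K\<in>indep_sets. K \<inter> nbhd v = {}}. \<Sum>S\<in>Pow (free_nbhd v K). g (K \<union> S))"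
proof -
  define \<K> where "\<K> = {K\<in>indep_sets. K \<inter> nbhd v = {}}"
  have bij: "bij_betw (\<lambda>(K, S). K \<union> S) (Sigma \<K> (\<lambda>K. Pow (free_nbhd v K))) indep_sets"
  proof (rule bij_betw_byWitness[where f' = "\<lambda>I. (I - nbhd v, I \<inter> nbhd v)"])
    show "(\<lambda>(K, S). K \<union> S) ` Sigma \<K> (\<lambda>K. Pow (free_nbhd v K)) \<subseteq> indep_sets"
    proof clarify
      fix K S assume K: "K \<in> \<K>" and S: "S \<subseteq> free_nbhd v K"
      have "\<not> E x y" if "x \<in> S" "y \<in> S" for x y
        using no_triangle v edge_in_V S that unfolding triangle_free_def free_nbhd_def nbhd_def by blast
      then have "independent_set V E (K \<union> S)"
        using K S indep_sets_subset indep_sets_no_edge edge_sym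
        unfolding independent_set_def \<K>_def free_nbhd_def nbhd_def by blast
      then show "K \<union> S \<in> indep_sets" by (simp add: indep_sets_def)
    qed
    show "(\<lambda>I. (I - nbhd v, I \<inter> nbhd v)) ` indep_sets \<subseteq> Sigma \<K> (\<lambda>K. Pow (free_nbhd v K))"
    proof
      fix x assume "x \<in> (\<lambda>I. (I - nbhd v, I \<inter> nbhd v)) ` indep_sets"
      then obtain I where I: "I \<in> indep_sets" and x: "x = (I - nbhd v, I \<inter> nbhd v)" by auto
      have "independent_set V E (I - nbhd v)"
        using indep_sets_subset[OF I] indep_sets_no_edge[OF I] unfolding independent_set_def by blast
      then have "I - nbhd v \<in> \<K>" by (auto simp: \<K>_def indep_sets_def)
      moreover have "I \<inter> nbhd v \<subseteq> free_nbhd v (I - nbhd v)"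
        using indep_sets_no_edge[OF I] unfolding free_nbhd_def by auto
      ultimately show "x \<in> Sigma \<K> (\<lambda>K. Pow (free_nbhd v K))" using x by auto
    qed
  qed (auto simp: \<K>_def free_nbhd_def)
  have "(\<Sum>I\<in>indep_sets. g I) = (\<Sum>(K, S)\<in>Sigma \<K> (\<lambda>K. Pow (free_nbhd v K)). g (K \<union> S))"
    using sum.reindex_bij_betw[OF bij, of g] by (simp add: case_prod_unfold)
  also have "\<dots> = (\<Sum>K\<in>\<K>. \<Sum>S\<in>Pow (free_nbhd v K). g (K \<union> S))"
    using finite_indep_sets finite_free_nbhd by (intro sum.Sigma[symmetric]) (auto simp: \<K>_def)
  finally show ?thesis unfolding \<K>_def .
qed

lemma sum_Pow_free_nbhd:
  fixes t w :: real
  assumes K: "K \<in> indep_sets" "K \<inter> nbhd v = {}" and t: "t > 0"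
  defines "a \<equiv> card (free_nbhd v K)"
  shows "(\<Sum>S\<in>Pow (free_nbhd v K).
      ((1 + w) - ln (1 + t) * (1 + t) / t * real (card ((K \<union> S) \<inter> nbhd v))) * t ^ card (K \<union> S))
    = t ^ card K * (1 + t) ^ a * (1 + w - ln (1 + t) * a)"
proof -
  define A where "A = free_nbhd v K"
  have inter: "(K \<union> S) \<inter> nbhd v = S" and card_Un: "card (K \<union> S) = card K + card S" if "S \<subseteq> A" for S
  proof -
    have "finite S" using that finite_free_nbhd[of v K] finite_subset unfolding A_def by blast
    moreover have "S \<subseteq> nbhd v" using that unfolding A_def free_nbhd_def by auto
    ultimately show "(K \<union> S) \<inter> nbhd v = S" "card (K \<union> S) = card K + card S"
      using K finite_indep_set by (auto intro: card_Un_disjoint)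
  qed
  define L where "L = ln (1 + t)"
  define Q where "Q = (\<Sum>S\<in>Pow A. real (card S) * t ^ card S)"
  have "(\<Sum>S\<in>Pow A. ((1 + w) - L * (1 + t) / t * real (card ((K \<union> S) \<inter> nbhd v))) * t ^ card (K \<union> S))
      = (\<Sum>S\<in>Pow A. t ^ card K * ((1 + w) * t ^ card S - L * (1 + t) / t * (real (card S) * t ^ card S)))"
    by (rule sum.cong) (simp_all add: inter card_Un power_add algebra_simps)
  also have "\<dots> = t ^ card K * ((1 + w) * (\<Sum>S\<in>Pow A. t ^ card S) - L / t * ((1 + t) * Q))"
    unfolding Q_def by (simp add: sum_subtractf sum_distrib_left right_diff_distrib mult.assoc)
  also have "\<dots> = t ^ card K * (1 + t) ^ a * (1 + w - L * a)"
  proof -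
    have "finite A" unfolding A_def by (rule finite_free_nbhd)
    then have "(\<Sum>S\<in>Pow A. t ^ card S) = (1 + t) ^ a" "(1 + t) * Q = a * t * (1 + t) ^ a"
      unfolding Q_def a_def A_def by (simp_all add: sum_Pow_power_card sum_Pow_card_mult_power_card)
    then show ?thesis using t by (simp add: algebra_simps)
  qed
  finally show ?thesis unfolding A_def L_def .
qed

text \<open>Averaging \<open>(1+t)^-Y\<close> over the number \<open>Y\<close> of neighbours of \<open>v\<close> that are free to be
  occupied, using the tangent line \<open>exp(-x) \<ge> exp(-w)(1+w-x)\<close> at \<open>x = w\<close>.\<close>
lemma avoiding_nbhd_lower_bound:
  fixes t w :: real
  assumes v: "v \<in> V" and t: "t > 0"
  shows "exp (-w) * (\<Sum>I\<in>indep_sets. ((1 + w) - ln (1 + t) * (1 + t) / t * real (card (I \<inter> nbhd v))) * t ^ card I)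
    \<le> (\<Sum>I\<in>{I\<in>indep_sets. I \<inter> nbhd v = {}}. t ^ card I)"
proof -
  define L where "L = ln (1 + t)"
  have block_le: "exp (-w) * (t ^ card K * (1 + t) ^ a * (1 + w - L * a)) \<le> t ^ card K" for K a
  proof -
    have "(1 + t) ^ a = exp (L * a)"
      unfolding L_def using t by (subst mult.commute, subst exp_of_nat_mult) simp
    then have "exp (-w) * ((1 + t) ^ a * (1 + w - L * a)) = exp (L * a - w) * (1 + (w - L * a))"
      by (simp add: exp_diff exp_minus field_simps)
    also have "\<dots> \<le> exp (L * a - w) * exp (w - L * a)"
      by (intro mult_left_mono) auto
    also have "\<dots> = 1" by (simp add: exp_add[symmetric])
    finally have "exp (-w) * ((1 + t) ^ a * (1 + w - L * a)) \<le> 1" .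
    then have "t ^ card K * (exp (-w) * ((1 + t) ^ a * (1 + w - L * a))) \<le> t ^ card K * 1"
      using t by (intro mult_left_mono) simp_all
    then show ?thesis by (simp add: algebra_simps)
  qed
  have "exp (-w) * (\<Sum>I\<in>indep_sets. ((1 + w) - L * (1 + t) / t * real (card (I \<inter> nbhd v))) * t ^ card I)
      = exp (-w) * (\<Sum>K\<in>{K\<in>indep_sets. K \<inter> nbhd v = {}}.
          t ^ card K * (1 + t) ^ card (free_nbhd v K) * (1 + w - L * card (free_nbhd v K)))"
    unfolding sum_indep_sets_split_nbhd[OF v] L_def
    using sum_Pow_free_nbhd t by (intro arg_cong2[where f = "(*)"] sum.cong) auto
  also have "\<dots> = (\<Sum>K\<in>{K\<in>indep_sets. K \<inter> nbhd v = {}}.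
          exp (-w) * (t ^ card K * (1 + t) ^ card (free_nbhd v K) * (1 + w - L * card (free_nbhd v K))))"
    by (simp add: sum_distrib_left)
  also have "\<dots> \<le> (\<Sum>K\<in>{K\<in>indep_sets. K \<inter> nbhd v = {}}. t ^ card K)"
    by (intro sum_mono block_le)
  finally show ?thesis unfolding L_def .
qed

definition hardcore_pf_deriv :: "real \<Rightarrow> real" where
  "hardcore_pf_deriv t = (\<Sum>I\<in>indep_sets. real (card I) * t ^ (card I - 1))"

lemma has_real_derivative_hardcore_pf:
  "(hardcore_pf V E has_real_derivative hardcore_pf_deriv t) (at t)"
  unfolding hardcore_pf_eq[abs_def] hardcore_pf_deriv_def
  by (rule DERIV_sum) (metis DERIV_pow One_nat_def)

lemma mult_hardcore_pf_deriv:
  "t * hardcore_pf_deriv t = (\<Sum>I\<in>indep_sets. real (card I) * t ^ card I)"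
  unfolding hardcore_pf_deriv_def sum_distrib_left
  by (rule sum.cong) (auto simp: power_eq_if)

lemma hardcore_pf_deriv_eq_sum_avoiding:
  fixes t :: real
  assumes "t > 0"
  shows "(1 + t) * hardcore_pf_deriv t = (\<Sum>v\<in>V. \<Sum>I\<in>{I\<in>indep_sets. I \<inter> nbhd v = {}}. t ^ card I)"
proof -
  have "t * ((1 + t) * hardcore_pf_deriv t) = (1 + t) * (t * hardcore_pf_deriv t)"
    by (rule mult.left_commute)
  also have "\<dots> = (\<Sum>v\<in>V. (1 + t) * (\<Sum>I\<in>{I\<in>indep_sets. v \<in> I}. t ^ card I))"
    unfolding mult_hardcore_pf_deriv sum_occupied_vertices[symmetric] by (rule sum_distrib_left)
  also have "\<dots> = (\<Sum>v\<in>V. t * (\<Sum>I\<in>{I\<in>indep_sets. I \<inter> nbhd v = {}}. t ^ card I))"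
    by (intro sum.cong) (simp_all add: occupied_vertex_sum)
  also have "\<dots> = t * (\<Sum>v\<in>V. \<Sum>I\<in>{I\<in>indep_sets. I \<inter> nbhd v = {}}. t ^ card I)"
    by (rule sum_distrib_left[symmetric])
  finally show ?thesis using assms by simp
qed

lemma sum_avoiding_nbhd_lower_bound:
  fixes t w :: real
  assumes t: "t > 0"
  shows "exp (-w) * ((1 + w) * real (card V) * hardcore_pf V E t
      - real d * ln (1 + t) * (1 + t) * hardcore_pf_deriv t)
    \<le> (\<Sum>v\<in>V. \<Sum>I\<in>{I\<in>indep_sets. I \<inter> nbhd v = {}}. t ^ card I)"
proof -
  define c where "c = ln (1 + t) * (1 + t) / t"
  define covered where "covered v = (\<Sum>I\<in>indep_sets. real (card (I \<inter> nbhd v)) * t ^ card I)" for v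
  have vertex_bound: "exp (-w) * ((1 + w) * hardcore_pf V E t - c * covered v)
      \<le> (\<Sum>I\<in>{I\<in>indep_sets. I \<inter> nbhd v = {}}. t ^ card I)" if "v \<in> V" for v
  proof -
    have "(\<Sum>I\<in>indep_sets. ((1 + w) - c * real (card (I \<inter> nbhd v))) * t ^ card I)
        = (1 + w) * hardcore_pf V E t - c * covered v"
      unfolding covered_def hardcore_pf_eq
      by (simp add: left_diff_distrib sum_subtractf sum_distrib_left mult.assoc)
    then show ?thesis using avoiding_nbhd_lower_bound[OF that t, of w] unfolding c_def by simp
  qed
  have "exp (-w) * ((1 + w) * real (card V) * hardcore_pf V E t - c * (\<Sum>v\<in>V. covered v))
      = (\<Sum>v\<in>V. exp (-w) * ((1 + w) * hardcore_pf V E t - c * covered v))"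
    by (simp add: sum_distrib_left sum_subtractf algebra_simps)
  also have "\<dots> \<le> (\<Sum>v\<in>V. \<Sum>I\<in>{I\<in>indep_sets. I \<inter> nbhd v = {}}. t ^ card I)"
    by (rule sum_mono) (rule vertex_bound)
  finally have "exp (-w) * ((1 + w) * real (card V) * hardcore_pf V E t - c * (\<Sum>v\<in>V. covered v))
      \<le> (\<Sum>v\<in>V. \<Sum>I\<in>{I\<in>indep_sets. I \<inter> nbhd v = {}}. t ^ card I)" .
  moreover have "c * (\<Sum>v\<in>V. covered v) \<le> c * (real d * (t * hardcore_pf_deriv t))"
    using sum_card_inter_nbhd_le t unfolding covered_def mult_hardcore_pf_deriv c_def
    by (intro mult_left_mono) simp_all
  moreover have "c * (real d * (t * hardcore_pf_deriv t)) = real d * ln (1 + t) * (1 + t) * hardcore_pf_deriv t"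
    using t unfolding c_def by simp
  ultimately show ?thesis by (smt (verit) exp_gt_zero mult_left_mono)
qed

lemma occupancy_lower_bound:
  fixes t w :: real
  assumes t: "t > 0" and w: "w > 0" and dw: "real d * ln (1 + t) = w * exp w"
  shows "exp (-w) * real (card V) * hardcore_pf V E t \<le> (1 + t) * hardcore_pf_deriv t"
proof -
  define n where "n = real (card V)"
  define Z where "Z = hardcore_pf V E t"
  define Z' where "Z' = hardcore_pf_deriv t"
  have tangent_slope: "exp (-w) * real d * ln (1 + t) = w" using dw by (simp add: exp_minus field_simps)
  have "exp (-w) * (1 + w) * n * Z - w * (1 + t) * Z'
      = exp (-w) * (1 + w) * n * Z - (exp (-w) * real d * ln (1 + t)) * (1 + t) * Z'"
    by (simp only: tangent_slope)
  also have "\<dots> = exp (-w) * ((1 + w) * n * Z - real d * ln (1 + t) * (1 + t) * Z')"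
    by (simp add: algebra_simps)
  also have "\<dots> \<le> (1 + t) * Z'"
    using sum_avoiding_nbhd_lower_bound[OF t, of w] hardcore_pf_deriv_eq_sum_avoiding[OF t]
    unfolding n_def Z_def Z'_def by simp
  finally have "(1 + w) * (exp (-w) * n * Z) \<le> (1 + w) * ((1 + t) * Z')"
    by (simp add: algebra_simps)
  then show ?thesis using w unfolding n_def Z_def Z'_def by (simp add: mult_left_le_imp_le)
qed

lemma has_real_derivative_hardcore_pf_comp [derivative_intros]:
  "(f has_real_derivative f') (at x within S) \<Longrightarrow>
    ((\<lambda>x. hardcore_pf V E (f x)) has_real_derivative hardcore_pf_deriv (f x) * f') (at x within S)"
  by (rule DERIV_chain2[OF has_real_derivative_hardcore_pf])

lemma hardcore_pf_lower_bound:
  fixes lam :: real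
  assumes d: "d \<ge> 1" and lam: "lam > 0"
  defines "w \<equiv> lambertW (real d * ln (1 + lam))"
  shows "exp ((w\<^sup>2 + 2 * w) * real (card V) / (2 * real d)) \<le> hardcore_pf V E lam"
proof -
  define n where "n = real (card V)"
  define \<tau> where "\<tau> x = exp (x * exp x / real d) - 1" for x
  define G where "G x = ln (hardcore_pf V E (\<tau> x)) - n * (x\<^sup>2 + 2 * x) / (2 * real d)" for x
  define G' where "G' x = (1 + x) / real d
      * ((1 + \<tau> x) * exp x * hardcore_pf_deriv (\<tau> x) / hardcore_pf V E (\<tau> x) - n)" for x
  have pf_pos: "hardcore_pf V E (\<tau> x) > 0" if "x \<ge> 0" for x
    using hardcore_pf_ge_1[of "\<tau> x"] that by (simp add: \<tau>_def)
  have G_deriv: "(G has_real_derivative G' x) (at x)" if "x \<ge> 0" for x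
    unfolding G_def[abs_def] G'_def \<tau>_def using d pf_pos[OF that]
    by (auto intro!: derivative_eq_intros simp: \<tau>_def field_simps power2_eq_square)
  have G'_nonneg: "G' x \<ge> 0" if x: "x > 0" for x
  proof -
    have t: "\<tau> x > 0" and dt: "real d * ln (1 + \<tau> x) = x * exp x"
      using x d by (simp_all add: \<tau>_def)
    have "exp (-x) * n * hardcore_pf V E (\<tau> x) \<le> (1 + \<tau> x) * hardcore_pf_deriv (\<tau> x)"
      using occupancy_lower_bound[OF t x dt] unfolding n_def .
    then have "n \<le> (1 + \<tau> x) * exp x * hardcore_pf_deriv (\<tau> x) / hardcore_pf V E (\<tau> x)"
      using pf_pos[of x] x by (simp add: exp_minus field_simps)
    then show ?thesis unfolding G'_def using x by simp
  qed
  have w: "w > 0" "w * exp w = real d * ln (1 + lam)"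
    unfolding w_def using lambertW d lam by auto
  have "G 0 \<le> G w"
  proof (rule DERIV_nonneg_imp_increasing_open[of 0 w G])
    show "continuous_on {0..w} G"
      using G_deriv by (intro DERIV_continuous_on[where D = G']) (auto intro: has_field_derivative_at_within)
    show "\<exists>y. (G has_real_derivative y) (at x) \<and> 0 \<le> y" if "0 < x" "x < w" for x
      using G_deriv[of x] G'_nonneg[of x] that by auto
  qed (use w in simp)
  moreover have "G 0 = 0" and "\<tau> w = lam"
    using w d lam by (simp_all add: G_def \<tau>_def hardcore_pf_0)
  ultimately have "n * (w\<^sup>2 + 2 * w) / (2 * real d) \<le> ln (hardcore_pf V E lam)"
    unfolding G_def by simp
  then show ?thesis
    using hardcore_pf_ge_1[of lam] lam by (simp add: ln_ge_iff n_def mult.commute)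
qed

end

lemma hardcore_pf_1: "hardcore_pf V E 1 = real (card {J. independent_set V E J})"
  by (simp add: hardcore_pf_def)

lemma lambertW_ln2_ge:
  fixes x \<epsilon> :: real
  assumes \<epsilon>: "0 < \<epsilon>" "\<epsilon> < 1" and x: "x > 1" "4 \<le> ln 2 * \<epsilon>\<^sup>2 * ln x"
  shows "(1 - \<epsilon>) * ln x \<le> lambertW (x * ln 2)"
proof -
  define y where "y = ln x"
  have y: "y > 0" using x by (simp add: y_def)
  have "y \<le> ln 2 * ((\<epsilon> * y)\<^sup>2 / 4)"
    using x y by (simp add: y_def power2_eq_square field_simps)
  also have "\<dots> \<le> ln 2 * (1 + \<epsilon> * y / 2)\<^sup>2"
    using \<epsilon> y by (intro mult_left_mono) (simp_all add: power2_eq_square field_simps)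
  also have "\<dots> \<le> ln 2 * exp (\<epsilon> * y)"
  proof (rule mult_left_mono)
    have "-2 \<le> \<epsilon> * y" using \<epsilon> y by (smt (verit) mult_pos_pos)
    then show "(1 + \<epsilon> * y / 2)\<^sup>2 \<le> exp (\<epsilon> * y)"
      using exp_ge_one_plus_x_over_n_power_n[of 2 "\<epsilon> * y"] by simp
  qed simp
  finally have "(1 - \<epsilon>) * y \<le> ln 2 * exp (\<epsilon> * y)"
    using \<epsilon> y by (smt (verit) mult_le_cancel_right1)
  then have "(1 - \<epsilon>) * y * exp ((1 - \<epsilon>) * y) \<le> ln 2 * exp (\<epsilon> * y) * exp ((1 - \<epsilon>) * y)"
    by (simp add: mult_right_mono)
  also have "\<dots> = x * ln 2"
    using x by (simp add: y_def mult_exp_exp algebra_simps)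
  finally show ?thesis
    unfolding y_def[symmetric] using \<epsilon> y le_lambertW[of "(1 - \<epsilon>) * y"] by simp
qed

lemma lambertW_ln2_lower_bound:
  fixes \<epsilon> :: real
  assumes \<epsilon>: "\<epsilon> > 0"
  shows "\<exists>d0::nat. d0 \<ge> 1 \<and> (\<forall>d\<ge>d0. (1 - 2 * \<epsilon>) * (ln (real d))\<^sup>2
    \<le> (lambertW (real d * ln 2))\<^sup>2 + 2 * lambertW (real d * ln 2))"
proof -
  define d0 where "d0 = nat \<lceil>exp (4 / (ln 2 * \<epsilon>\<^sup>2))\<rceil> + 2"
  have "(1 - 2 * \<epsilon>) * (ln (real d))\<^sup>2 \<le> (lambertW (real d * ln 2))\<^sup>2 + 2 * lambertW (real d * ln 2)"
    if "d0 \<le> d" for d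
  proof -
    define w where "w = lambertW (real d * ln 2)"
    have d: "real d \<ge> 2" and "exp (4 / (ln 2 * \<epsilon>\<^sup>2)) \<le> real d"
      using that unfolding d0_def by linarith+
    then have "4 / (ln 2 * \<epsilon>\<^sup>2) \<le> ln (real d)" by (simp add: ln_ge_iff)
    then have "4 \<le> ln 2 * \<epsilon>\<^sup>2 * ln (real d)"
      using \<epsilon> by (simp add: pos_divide_le_eq mult.commute)
    have w: "w > 0" using d by (simp add: w_def lambertW_pos)
    have "(1 - 2 * \<epsilon>) * (ln (real d))\<^sup>2 \<le> w\<^sup>2 + 2 * w"
    proof (cases "\<epsilon> < 1/2")
      case True
      then have "(1 - \<epsilon>) * ln (real d) \<le> w"
        using lambertW_ln2_ge \<epsilon> d \<open>4 \<le> _\<close> by (simp add: w_def)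
      moreover have "0 \<le> (1 - \<epsilon>) * ln (real d)" using True d by simp
      ultimately have "((1 - \<epsilon>) * ln (real d))\<^sup>2 \<le> w\<^sup>2" by (rule power_mono)
      moreover have "((1 - \<epsilon>) * ln (real d))\<^sup>2
          = (1 - 2 * \<epsilon>) * (ln (real d))\<^sup>2 + (\<epsilon> * ln (real d))\<^sup>2"
        by (simp add: power2_eq_square algebra_simps)
      ultimately show ?thesis using w zero_le_power2[of "\<epsilon> * ln (real d)"] by linarith
    next
      case False
      then have "(1 - 2 * \<epsilon>) * (ln (real d))\<^sup>2 \<le> 0" by (intro mult_nonpos_nonneg) auto
      moreover have "0 \<le> w\<^sup>2 + 2 * w" using w by simp
      ultimately show ?thesis by linarith
    qed
    then show ?thesis by (simp add: w_def)
  qed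
  then show ?thesis by (intro exI[of _ d0]) (simp add: d0_def)
qed

lemma hardcore_pf_ge_exp_lambertW:
  assumes "d \<ge> 1" "simple_graph V E" "triangle_free V E" "max_degree_eq V E d" "lam > 0"
  defines "w \<equiv> lambertW (real d * ln (1 + lam))"
  shows "exp ((w\<^sup>2 + 2 * w) * real (card V) / (2 * real d)) \<le> hardcore_pf V E lam"
proof -
  interpret bounded_degree_triangle_free_graph V E d
    using assms by unfold_locales (auto simp: max_degree_eq_def)
  show ?thesis using hardcore_pf_lower_bound assms unfolding w_def by blast
qed

lemma card_independent_sets_asymptotic_lower_bound:
  fixes \<epsilon> :: real
  assumes "\<epsilon> > 0"
  shows "\<exists>d0::nat. \<forall>d\<ge>d0. \<forall>(V :: 'a set) E.
    simple_graph V E \<and> triangle_free V E \<and> max_degree_eq V E d \<longrightarrow>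
    exp ((1/2 - \<epsilon>) * (ln (real d))\<^sup>2 / real d * real (card V)) \<le> real (card {J. independent_set V E J})"
proof -
  obtain d0 :: nat where "d0 \<ge> 1" and d0: "\<And>d. d \<ge> d0 \<Longrightarrow> (1 - 2 * \<epsilon>) * (ln (real d))\<^sup>2
      \<le> (lambertW (real d * ln 2))\<^sup>2 + 2 * lambertW (real d * ln 2)"
    using lambertW_ln2_lower_bound[OF assms] by blast
  have "exp ((1/2 - \<epsilon>) * (ln (real d))\<^sup>2 / real d * real (card V)) \<le> real (card {J. independent_set V E J})"
    if "d0 \<le> d" and G: "simple_graph V E" "triangle_free V E" "max_degree_eq V E d"
    for d and V :: "'a set" and E
  proof -
    define w where "w = lambertW (real d * ln 2)"
    have "d \<ge> 1" using \<open>d0 \<ge> 1\<close> \<open>d0 \<le> d\<close> by simp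
    have "(1/2 - \<epsilon>) * (ln (real d))\<^sup>2 / real d * real (card V)
        = (1 - 2 * \<epsilon>) * (ln (real d))\<^sup>2 * real (card V) / (2 * real d)"
      by (simp add: field_simps)
    also have "\<dots> \<le> (w\<^sup>2 + 2 * w) * real (card V) / (2 * real d)"
      using d0[OF \<open>d0 \<le> d\<close>] unfolding w_def[symmetric]
      by (intro divide_right_mono mult_right_mono) auto
    also have "exp \<dots> \<le> real (card {J. independent_set V E J})"
      using hardcore_pf_ge_exp_lambertW[OF \<open>d \<ge> 1\<close> G, of 1] by (simp add: w_def hardcore_pf_1)
    finally show ?thesis by simp
  qed
  then show ?thesis by blast
qed

theorem theorem1p5:
  shows "(\<forall>(V :: 'a set) E (d :: nat) (lam :: real).
            d \<ge> 1 \<and> simple_graph V E \<and> triangle_free V E \<and> max_degree_eq V E d \<and> lam > 0 \<longrightarrow>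
            (let w = lambertW (real d * ln (1 + lam))
             in hardcore_pf V E lam \<ge> exp ((w^2 + 2*w) * real (card V) / (2 * real d))))
       \<and> (\<forall>\<epsilon> :: real. \<epsilon> > 0 \<longrightarrow> (\<exists>d0 :: nat. \<forall>d \<ge> d0. \<forall>(V :: nat set) E.
            simple_graph V E \<and> triangle_free V E \<and> max_degree_eq V E d \<longrightarrow>
            real (card {J. independent_set V E J})
              \<ge> exp ((1/2 - \<epsilon>) * (ln (real d))^2 / real d * real (card V))))"
  using hardcore_pf_ge_exp_lambertW card_independent_sets_asymptotic_lower_bound
  by (auto simp: Let_def)

end
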